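(* The map $\rho:HC_F(\mathbf v,d)\to Z(\mathbf v,d)$, $\rho([u,y_1,y_2,r_1,r_2])=[u,y_1,y_2]$, is surjective. Moreover, if $\mathbf v_1=(v_{11},v_{12})$, $\mathbf v_2=(v_{21},v_{22})$ are real vectors and $d\in\mathbb{R}$, then $\rho$ restricts to a surjective map $HC_F(\mathbf v,d)(\mathbb{R})\to Z(\mathbf v,d)(\mathbb{R})$.
   Context: Parameters $[\mathbf v,d]=[v_{11},v_{12},v_{21},v_{22},d]\in\mathbb{C}P^4$ (not all zero). On $\mathbb{C}P^4$ with coordinates $[u,y_1,y_2,r_1,r_2]$, let $L_1=v_{11}(u-y_1)-v_{12}y_2$, $L_2=-v_{21}(u+y_1)-v_{22}y_2$, $f_1=(u-y_1)^2+y_2^2$, $f_2=(u+y_1)^2+y_2^2$, and let $HC_F(\mathbf v,d)$ be the set of points with $f_1=r_1^2$, $f_2=r_2^2$ and $L_2r_1-L_1r_2-dr_1r_2=0$. Let $Z(\mathbf v,d)\subset\mathbb{C}P^2$ (coordinates $[u,y_1,y_2]$) be the zero set of $h=(L_2^2f_1+L_1^2f_2-d^2f_1f_2)^2-4L_1^2L_2^2f_1f_2$. For a variety defined by real polynomials, its set of real points $(\mathbb{R})$ consists of its points having a representative with all homogeneous coordinates real. *)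

theory Defs
  imports Complex_Main
begin

text \<open>Points of CP^n are represented by nonzero coordinate tuples (representatives);
two representatives give the same point iff they differ by a nonzero scalar.\<close>

type_synonym cp2 = "complex \<times> complex \<times> complex"
type_synonym cp4 = "complex \<times> complex \<times> complex \<times> complex \<times> complex"

definition proj_eq3 :: "cp2 \<Rightarrow> cp2 \<Rightarrow> bool" where
  "proj_eq3 p q \<longleftrightarrow> (\<exists>c::complex. c \<noteq> 0 \<and>
     fst p = c * fst q \<and> fst (snd p) = c * fst (snd q) \<and> snd (snd p) = c * snd (snd q))"

definition LL1 :: "complex \<Rightarrow> complex \<Rightarrow> complex \<Rightarrow> complex \<Rightarrow> complex \<Rightarrow> complex" where
  "LL1 v11 v12 u y1 y2 = v11 * (u - y1) - v12 * y2"

definition LL2 :: "complex \<Rightarrow> complex \<Rightarrow> complex \<Rightarrow> complex \<Rightarrow> complex \<Rightarrow> complex" where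
  "LL2 v21 v22 u y1 y2 = - v21 * (u + y1) - v22 * y2"

definition ff1 :: "complex \<Rightarrow> complex \<Rightarrow> complex \<Rightarrow> complex" where
  "ff1 u y1 y2 = (u - y1)^2 + y2^2"

definition ff2 :: "complex \<Rightarrow> complex \<Rightarrow> complex \<Rightarrow> complex" where
  "ff2 u y1 y2 = (u + y1)^2 + y2^2"

definition HC_F :: "complex \<Rightarrow> complex \<Rightarrow> complex \<Rightarrow> complex \<Rightarrow> complex \<Rightarrow> cp4 set" where
  "HC_F v11 v12 v21 v22 d = {(u, y1, y2, r1, r2).
      (u, y1, y2, r1, r2) \<noteq> (0, 0, 0, 0, 0) \<and>
      ff1 u y1 y2 = r1^2 \<and> ff2 u y1 y2 = r2^2 \<and>
      LL2 v21 v22 u y1 y2 * r1 - LL1 v11 v12 u y1 y2 * r2 - d * r1 * r2 = 0}"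

definition hpoly :: "complex \<Rightarrow> complex \<Rightarrow> complex \<Rightarrow> complex \<Rightarrow> complex \<Rightarrow>
                     complex \<Rightarrow> complex \<Rightarrow> complex \<Rightarrow> complex" where
  "hpoly v11 v12 v21 v22 d u y1 y2 =
     (let L1 = LL1 v11 v12 u y1 y2; L2 = LL2 v21 v22 u y1 y2;
          f1 = ff1 u y1 y2; f2 = ff2 u y1 y2
      in (L2^2 * f1 + L1^2 * f2 - d^2 * f1 * f2)^2 - 4 * L1^2 * L2^2 * f1 * f2)"

definition Zset :: "complex \<Rightarrow> complex \<Rightarrow> complex \<Rightarrow> complex \<Rightarrow> complex \<Rightarrow> cp2 set" where
  "Zset v11 v12 v21 v22 d = {(u, y1, y2).
      (u, y1, y2) \<noteq> (0, 0, 0) \<and> hpoly v11 v12 v21 v22 d u y1 y2 = 0}"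

definition rho :: "cp4 \<Rightarrow> cp2" where
  "rho q = (case q of (u, y1, y2, r1, r2) \<Rightarrow> (u, y1, y2))"

definition real3 :: "cp2 \<Rightarrow> bool" where
  "real3 p \<longleftrightarrow> (case p of (a, b, c) \<Rightarrow> a \<in> \<real> \<and> b \<in> \<real> \<and> c \<in> \<real>)"

definition real5 :: "cp4 \<Rightarrow> bool" where
  "real5 q \<longleftrightarrow> (case q of (a, b, c, e, g) \<Rightarrow>
      a \<in> \<real> \<and> b \<in> \<real> \<and> c \<in> \<real> \<and> e \<in> \<real> \<and> g \<in> \<real>)"

end

theory Submission
  imports Defs
begin

text \<open>Writing a = L2 r1, b = L1 r2, c = d r1 r2 with r1^2 = f1, r2^2 = f2, the polynomial h is
  the Heron-type product (a^2 + b^2 - c^2)^2 - 4 a^2 b^2 = (a+b+c)(a+b-c)(a-b+c)(a-b-c), whose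
  four factors are the cubic defining HC_F evaluated at the four sign choices (\<plusminus>r1, \<plusminus>r2).
  Hence h vanishes at [u,y1,y2] exactly when some choice of square roots of f1, f2 completes it to
  a point of HC_F. At a real point f1 and f2 are sums of two real squares, so both square roots,
  and therefore all four sign choices, are real.\<close>

lemma heron_factorization:
  fixes a b c :: "'a::comm_ring_1"
  shows "(a^2 + b^2 - c^2)^2 - 4*a^2*b^2 = (a+b+c) * (a+b-c) * (a-b+c) * (a-b-c)"
  by (simp add: algebra_simps power2_eq_square)

lemma exists_signed_roots_on_cubic:
  fixes L1 L2 d s1 s2 f1 f2 :: "'a::idom"
  assumes "s1^2 = f1" "s2^2 = f2"
    and "(L2^2*f1 + L1^2*f2 - d^2*f1*f2)^2 - 4*L1^2*L2^2*f1*f2 = 0"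
  shows "\<exists>r1 \<in> {s1, -s1}. \<exists>r2 \<in> {s2, -s2}. L2*r1 - L1*r2 - d*r1*r2 = 0"
proof -
  have "(L2*s1 + L1*s2 + d*s1*s2) * (L2*s1 + L1*s2 - d*s1*s2)
      * (L2*s1 - L1*s2 + d*s1*s2) * (L2*s1 - L1*s2 - d*s1*s2) = 0"
    using assms heron_factorization[of "L2*s1" "L1*s2" "d*s1*s2"]
    by (simp add: power_mult_distrib mult_ac)
  then consider "L2*s1 + L1*s2 + d*s1*s2 = 0" | "L2*s1 + L1*s2 - d*s1*s2 = 0"
    | "L2*s1 - L1*s2 + d*s1*s2 = 0" | "L2*s1 - L1*s2 - d*s1*s2 = 0"
    by auto
  then show ?thesis
  proof cases
    case 1
    then have "L2*s1 - L1*(-s2) - d*s1*(-s2) = 0" by (simp add: algebra_simps)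
    then show ?thesis by blast
  next
    case 2
    then have "L2*(-s1) - L1*s2 - d*(-s1)*s2 = 0" by (simp add: algebra_simps)
    then show ?thesis by blast
  next
    case 3
    then have "L2*(-s1) - L1*(-s2) - d*(-s1)*(-s2) = 0" by (simp add: algebra_simps)
    then show ?thesis by blast
  qed blast
qed

lemma hpoly_eq:
  "hpoly v11 v12 v21 v22 d u y1 y2 =
     ((LL2 v21 v22 u y1 y2)^2 * ff1 u y1 y2 + (LL1 v11 v12 u y1 y2)^2 * ff2 u y1 y2
        - d^2 * ff1 u y1 y2 * ff2 u y1 y2)^2
     - 4 * (LL1 v11 v12 u y1 y2)^2 * (LL2 v21 v22 u y1 y2)^2 * ff1 u y1 y2 * ff2 u y1 y2"
  by (simp add: hpoly_def Let_def)

lemma rho_HC_F_in_Zset: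
  assumes "q \<in> HC_F v11 v12 v21 v22 d"
  shows "rho q \<in> Zset v11 v12 v21 v22 d"
proof -
  obtain u y1 y2 r1 r2 where q: "q = (u, y1, y2, r1, r2)" by (cases q) auto
  let ?L1 = "LL1 v11 v12 u y1 y2" and ?L2 = "LL2 v21 v22 u y1 y2"
  have HC: "(u, y1, y2, r1, r2) \<noteq> (0, 0, 0, 0, 0)"
    "ff1 u y1 y2 = r1^2" "ff2 u y1 y2 = r2^2" "?L2 * r1 - ?L1 * r2 - d * r1 * r2 = 0"
    using assms q by (auto simp: HC_F_def)
  have "(u, y1, y2) \<noteq> (0, 0, 0)"
    using HC(1-3) by (auto simp: ff1_def ff2_def)
  moreover have "hpoly v11 v12 v21 v22 d u y1 y2 = 0"
    using heron_factorization[of "?L2 * r1" "?L1 * r2" "d * r1 * r2"] HC(4)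
    by (simp add: hpoly_eq HC(2,3) power_mult_distrib mult_ac)
  ultimately show ?thesis
    by (simp add: q rho_def Zset_def)
qed

lemma Zset_lift_to_HC_F:
  assumes "(u, y1, y2) \<in> Zset v11 v12 v21 v22 d"
    and "s1^2 = ff1 u y1 y2" "s2^2 = ff2 u y1 y2"
  shows "\<exists>r1 \<in> {s1, -s1}. \<exists>r2 \<in> {s2, -s2}. (u, y1, y2, r1, r2) \<in> HC_F v11 v12 v21 v22 d"
proof -
  have Z: "(u, y1, y2) \<noteq> (0, 0, 0)" "hpoly v11 v12 v21 v22 d u y1 y2 = 0"
    using assms(1) by (auto simp: Zset_def)
  obtain r1 r2 where r: "r1 \<in> {s1, -s1}" "r2 \<in> {s2, -s2}"
    and cubic: "LL2 v21 v22 u y1 y2 * r1 - LL1 v11 v12 u y1 y2 * r2 - d*r1*r2 = 0"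
    using exists_signed_roots_on_cubic[OF assms(2,3) Z(2)[unfolded hpoly_eq]] by blast
  have "r1^2 = ff1 u y1 y2" "r2^2 = ff2 u y1 y2"
    using r assms(2,3) by auto
  with Z(1) cubic have "(u, y1, y2, r1, r2) \<in> HC_F v11 v12 v21 v22 d"
    by (auto simp: HC_F_def)
  with r show ?thesis by blast
qed

lemma Reals_sum_squares_has_real_root:
  assumes "x \<in> \<real>" "y \<in> \<real>"
  shows "\<exists>s \<in> \<real>. s^2 = x^2 + (y::complex)^2"
proof -
  obtain a b where ab: "x = of_real a" "y = of_real b"
    using assms by (auto elim!: Reals_cases)
  have "(of_real (sqrt (a^2 + b^2)))^2 = x^2 + y^2"
    by (simp add: ab flip: of_real_power of_real_add)
  then show ?thesis by (metis Reals_of_real)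
qed

lemma proj_eq3_refl: "proj_eq3 p p"
  unfolding proj_eq3_def by (rule exI[where x=1]) simp

theorem lemma8p1:
  fixes v11 v12 v21 v22 d :: complex
  assumes "(v11, v12, v21, v22, d) \<noteq> (0, 0, 0, 0, 0)"
  shows "(\<forall>q \<in> HC_F v11 v12 v21 v22 d. rho q \<in> Zset v11 v12 v21 v22 d)
       \<and> (\<forall>p \<in> Zset v11 v12 v21 v22 d.
            \<exists>q \<in> HC_F v11 v12 v21 v22 d. proj_eq3 (rho q) p)
       \<and> ((v11 \<in> \<real> \<and> v12 \<in> \<real> \<and> v21 \<in> \<real> \<and> v22 \<in> \<real> \<and> d \<in> \<real>) \<longrightarrow>
            (\<forall>p \<in> Zset v11 v12 v21 v22 d. real3 p \<longrightarrow>
               (\<exists>q \<in> HC_F v11 v12 v21 v22 d. real5 q \<and> proj_eq3 (rho q) p)))"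
proof (intro conjI ballI impI)
  fix q assume "q \<in> HC_F v11 v12 v21 v22 d"
  then show "rho q \<in> Zset v11 v12 v21 v22 d" by (rule rho_HC_F_in_Zset)
next
  fix p assume p_Z: "p \<in> Zset v11 v12 v21 v22 d"
  obtain u y1 y2 where p: "p = (u, y1, y2)" by (cases p) auto
  obtain r1 r2 where "(u, y1, y2, r1, r2) \<in> HC_F v11 v12 v21 v22 d"
    using Zset_lift_to_HC_F[OF p_Z[unfolded p] power2_csqrt power2_csqrt] by blast
  then show "\<exists>q \<in> HC_F v11 v12 v21 v22 d. proj_eq3 (rho q) p"
    by (intro bexI[of _ "(u, y1, y2, r1, r2)"]) (simp_all add: p rho_def proj_eq3_refl)
next
  fix p assume p_Z: "p \<in> Zset v11 v12 v21 v22 d" and "real3 p"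
  obtain u y1 y2 where p: "p = (u, y1, y2)" by (cases p) auto
  with \<open>real3 p\<close> have real: "u \<in> \<real>" "y1 \<in> \<real>" "y2 \<in> \<real>"
    by (simp_all add: real3_def)
  obtain s1 where s1: "s1 \<in> \<real>" "s1^2 = ff1 u y1 y2"
    using Reals_sum_squares_has_real_root[of "u - y1" y2] real
    by (auto simp: ff1_def)
  obtain s2 where s2: "s2 \<in> \<real>" "s2^2 = ff2 u y1 y2"
    using Reals_sum_squares_has_real_root[of "u + y1" y2] real
    by (auto simp: ff2_def)
  obtain r1 r2 where "r1 \<in> {s1, -s1}" "r2 \<in> {s2, -s2}"
    and "(u, y1, y2, r1, r2) \<in> HC_F v11 v12 v21 v22 d"
    using Zset_lift_to_HC_F[OF p_Z[unfolded p] s1(2) s2(2)] by blast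
  with s1(1) s2(1) real show "\<exists>q \<in> HC_F v11 v12 v21 v22 d. real5 q \<and> proj_eq3 (rho q) p"
    by (intro bexI[of _ "(u, y1, y2, r1, r2)"]) (auto simp: p real5_def rho_def proj_eq3_refl)
qed

end
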